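(* Let $p$ be an odd prime and $a_1,a_2\in\mathbb{Z}_p^*$. If $a_1,a_2$ are either both quadratic residues modulo $p$ or both quadratic nonresidues modulo $p$, then $Q_{a_1,0}(\mathbb{Z}_p)\cong Q_{a_2,0}(\mathbb{Z}_p)$.
   Context: Identify $\mathbb{Z}_p$ with $\{0,\dots,p-1\}$. The overflow indicator is $(x,y)_p=1$ if $x+y\ge p$ as integers and $0$ otherwise. $Q_{a,b}(\mathbb{Z}_p)$ is $\mathbb{Z}_p^3$ with multiplication $(x_1,x_2,x_3)(y_1,y_2,y_3)=(x_1+y_1+(x_2+y_2)x_3y_3+a(x_2,y_2)_p+b(x_3,y_3)_p,\ x_2+y_2,\ x_3+y_3)$. *)

theory Defs
  imports "HOL-Number_Theory.Number_Theory"
begin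

text \<open>Z_p is identified with {0..<p} (natural numbers); all arithmetic is done mod p.\<close>

definition ovf :: "nat \<Rightarrow> nat \<Rightarrow> nat \<Rightarrow> nat" where
  "ovf p x y = (if x + y \<ge> p then 1 else 0)"

definition Qcarrier :: "nat \<Rightarrow> (nat \<times> nat \<times> nat) set" where
  "Qcarrier p = {0..<p} \<times> {0..<p} \<times> {0..<p}"

definition Qmult :: "nat \<Rightarrow> nat \<Rightarrow> nat \<Rightarrow> nat \<times> nat \<times> nat \<Rightarrow> nat \<times> nat \<times> nat \<Rightarrow> nat \<times> nat \<times> nat" where
  "Qmult p a b x y =
     (case x of (x1, x2, x3) \<Rightarrow> case y of (y1, y2, y3) \<Rightarrow>
       ((x1 + y1 + (x2 + y2) * x3 * y3 + a * ovf p x2 y2 + b * ovf p x3 y3) mod p,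
        (x2 + y2) mod p, (x3 + y3) mod p))"

definition Q_iso :: "nat \<Rightarrow> nat \<Rightarrow> nat \<Rightarrow> nat \<Rightarrow> nat \<Rightarrow> bool" where
  "Q_iso p a b c d \<longleftrightarrow> (\<exists>f. bij_betw f (Qcarrier p) (Qcarrier p) \<and>
     (\<forall>x\<in>Qcarrier p. \<forall>y\<in>Qcarrier p. f (Qmult p a b x y) = Qmult p c d (f x) (f y)))"

end

theory Submission
  imports Defs
begin

text \<open>
  Two nonzero residues a1, a2 of the same quadratic character differ by a
  square factor: a2 = s^2 a1 (mod p) for some unit s.  The rescaling
  (x1, x2, x3) \<mapsto> (s^2 x1, x2, s x3) is a bijection of the carrier, it leaves the
  middle coordinate (and hence the overflow indicator of the middle coordinates) unchanged,
  and it multiplies the first coordinate of a product by s^2; thus it turns the twisting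
  term a1 (x2,y2)_p into s^2 a1 (x2,y2)_p = a2 (x2,y2)_p, i.e. it is an isomorphism
  Q_{a1,0} \<rightarrow> Q_{a2,0}.  The square factor exists because a1 a2 is a quadratic
  residue, which follows from the multiplicativity of the Legendre symbol.
\<close>

lemma cong_sign_values_eq:
  fixes x y :: int and m :: nat
  assumes "x \<in> {-1, 0, 1}" and "y \<in> {-1, 0, 1}" and "2 < m" and "[x = y] (mod int m)"
  shows "x = y"
proof -
  have "int m dvd x - y" using assms(4) by (simp add: cong_iff_dvd_diff)
  moreover have "\<bar>x - y\<bar> < int m" using assms(1-3) by auto
  ultimately have "x - y = 0" using dvd_imp_le_int[of "x - y" "int m"] by fastforce
  then show ?thesis by simp
qed

lemma Legendre_values: "Legendre a p \<in> {-1, 0, 1}"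
  by (simp add: Legendre_def)

text \<open>Multiplicativity of the Legendre symbol, a consequence of Euler's criterion.\<close>
lemma Legendre_mult:
  fixes a b :: int and p :: nat
  assumes "prime p" and "2 < p"
  shows "Legendre (a * b) (int p) = Legendre a (int p) * Legendre b (int p)"
proof (rule cong_sign_values_eq[OF Legendre_values _ \<open>2 < p\<close>])
  let ?k = "(p - 1) div 2"
  show "Legendre a (int p) * Legendre b (int p) \<in> {-1, 0, 1}"
    using Legendre_values[of a "int p"] Legendre_values[of b "int p"] by auto
  have "[Legendre (a * b) (int p) = a ^ ?k * b ^ ?k] (mod int p)"
    using euler_criterion[OF assms, of "a * b"] by (simp add: power_mult_distrib)
  also have "[a ^ ?k * b ^ ?k = Legendre a (int p) * Legendre b (int p)] (mod int p)"
    using euler_criterion[OF assms] by (intro cong_mult) (simp_all add: cong_sym)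
  finally show "[Legendre (a * b) (int p) = Legendre a (int p) * Legendre b (int p)] (mod int p)" .
qed

lemma QuadRes_mult_same_character:
  fixes a b :: int and p :: nat
  assumes "prime p" and "2 < p"
    and "\<not> [a = 0] (mod int p)" and "\<not> [b = 0] (mod int p)"
    and "QuadRes (int p) a \<longleftrightarrow> QuadRes (int p) b"
  shows "QuadRes (int p) (a * b)"
proof -
  have "Legendre a (int p) = Legendre b (int p)" and "Legendre a (int p) \<in> {-1, 1}"
    using assms(3-5) by (auto simp: Legendre_def)
  then have "Legendre (a * b) (int p) = 1"
    using Legendre_mult[OF assms(1,2)] by auto
  then show ?thesis by (simp add: Legendre_def split: if_splits)
qed

lemma QuadRes_nat_root:
  fixes p a :: nat
  assumes "0 < p" and "QuadRes (int p) (int a)"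
  shows "\<exists>y::nat. [y ^ 2 = a] (mod p)"
proof -
  obtain z :: int where z: "[z ^ 2 = int a] (mod int p)"
    using assms(2) unfolding QuadRes_def by blast
  define y where "y = nat (z mod int p)"
  have "int y = z mod int p" using assms(1) by (simp add: y_def)
  then have "[int y ^ 2 = z ^ 2] (mod int p)"
    by (simp add: cong_def power_mod)
  then have "[int (y ^ 2) = int a] (mod int p)" using z by (simp add: cong_trans)
  then show ?thesis using cong_int_iff by blast
qed

lemma square_ratio_exists:
  fixes p a1 a2 :: nat
  assumes "prime p" and "2 < p"
    and "a1 \<in> {1..<p}" and "a2 \<in> {1..<p}"
    and "QuadRes (int p) (int a1) \<longleftrightarrow> QuadRes (int p) (int a2)"
  shows "\<exists>s. coprime s p \<and> [s ^ 2 * a1 = a2] (mod p)"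
proof -
  have not_dvd: "\<not> p dvd a" if "a \<in> {1..<p}" for a
    using that by (auto dest: nat_dvd_not_less)
  have "QuadRes (int p) (int (a1 * a2))"
    using QuadRes_mult_same_character[OF assms(1,2) _ _ assms(5)] not_dvd assms(3,4)
    by (simp add: cong_0_iff flip: of_nat_dvd_iff)
  then obtain y where y: "[y ^ 2 = a1 * a2] (mod p)"
    using QuadRes_nat_root prime_gt_0_nat[OF assms(1)] by blast
  have "coprime a1 p"
    using assms(1) not_dvd[OF assms(3)] by (metis coprime_commute prime_imp_coprime)
  then obtain b where b: "[a1 * b = 1] (mod p)" using cong_solve_coprime_nat by fastforce
  define s where "s = y * b"
  have "[s ^ 2 * a1 = y ^ 2 * b ^ 2 * a1] (mod p)" by (simp add: s_def power_mult_distrib)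
  also have "[y ^ 2 * b ^ 2 * a1 = a1 * a2 * b ^ 2 * a1] (mod p)"
    using y by (intro cong_mult cong_refl)
  also have "a1 * a2 * b ^ 2 * a1 = a2 * (a1 * b) ^ 2" by (simp add: power2_eq_square)
  also have "[a2 * (a1 * b) ^ 2 = a2 * 1 ^ 2] (mod p)" using b by (intro cong_mult cong_pow cong_refl)
  finally have ratio: "[s ^ 2 * a1 = a2] (mod p)" by simp
  have "coprime s p"
  proof (rule ccontr)
    assume "\<not> coprime s p"
    then have "p dvd s" using assms(1) by (metis coprime_commute prime_imp_coprime)
    then have "p dvd s ^ 2 * a1" by (simp add: power2_eq_square)
    then show False using ratio not_dvd[OF assms(4)] by (metis cong_dvd_iff)
  qed
  with ratio show ?thesis by blast
qed

definition Qscale :: "nat \<Rightarrow> nat \<Rightarrow> nat \<times> nat \<times> nat \<Rightarrow> nat \<times> nat \<times> nat" where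
  "Qscale p s = (\<lambda>(x1, x2, x3). (s ^ 2 * x1 mod p, x2, s * x3 mod p))"

text \<open>For a unit s the rescaling is a permutation of the carrier (an injective self-map of a finite set).\<close>
lemma Qscale_bij:
  assumes "coprime s p"
  shows "bij_betw (Qscale p s) (Qcarrier p) (Qcarrier p)"
proof -
  have maps_to: "Qscale p s ` Qcarrier p \<subseteq> Qcarrier p"
    by (auto simp: Qscale_def Qcarrier_def)
  have cancel: "x = y" if "[x * t = y * t] (mod p)" "coprime t p" "x < p" "y < p" for x y t :: nat
    using that by (metis cong_less_modulus_unique_nat cong_mult_rcancel_nat)
  have "inj_on (Qscale p s) (Qcarrier p)"
  proof (rule inj_onI)
    fix x y
    assume x: "x \<in> Qcarrier p" and y: "y \<in> Qcarrier p" and eq: "Qscale p s x = Qscale p s y"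
    obtain x1 x2 x3 y1 y2 y3 where xy: "x = (x1, x2, x3)" "y = (y1, y2, y3)"
      by (cases x, cases y) auto
    have "x1 < p" "y1 < p" "x3 < p" "y3 < p" using x y by (auto simp: xy Qcarrier_def)
    moreover have "[x1 * s ^ 2 = y1 * s ^ 2] (mod p)" "[x3 * s = y3 * s] (mod p)" "x2 = y2"
      using eq by (simp_all add: xy Qscale_def cong_def mult.commute)
    moreover have "coprime (s ^ 2) p" using assms by simp
    ultimately show "x = y" using xy assms cancel by blast
  qed
  moreover have "finite (Qcarrier p)" by (simp add: Qcarrier_def)
  ultimately show ?thesis using endo_inj_surj[OF _ maps_to] by (simp add: bij_betw_def)
qed

text \<open>
  The rescaling is a homomorphism Q_{a,0} \<rightarrow> Q_{c,0} whenever c = s^2 a (mod p): it fixes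
  the middle coordinates, hence their overflow, and scales the first coordinate by s^2.
\<close>
lemma Qscale_hom:
  assumes "[s ^ 2 * a = c] (mod p)"
  shows "Qscale p s (Qmult p a 0 x y) = Qmult p c 0 (Qscale p s x) (Qscale p s y)"
proof -
  obtain x1 x2 x3 y1 y2 y3 where xy: "x = (x1, x2, x3)" "y = (y1, y2, y3)"
    by (cases x, cases y) auto
  define ov where "ov = ovf p x2 y2"
  have "[s ^ 2 * (x1 + y1 + (x2 + y2) * x3 * y3 + a * ov)
        = s ^ 2 * x1 + s ^ 2 * y1 + (x2 + y2) * (s * x3) * (s * y3) + (s ^ 2 * a) * ov] (mod p)"
    by (simp add: power2_eq_square algebra_simps)
  also have "[s ^ 2 * x1 + s ^ 2 * y1 + (x2 + y2) * (s * x3) * (s * y3) + (s ^ 2 * a) * ov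
        = s ^ 2 * x1 mod p + s ^ 2 * y1 mod p
        + (x2 + y2) * (s * x3 mod p) * (s * y3 mod p) + c * ov] (mod p)"
    using assms by (intro cong_add cong_mult cong_refl) (simp_all add: cong_def)
  finally have first: "s ^ 2 * ((x1 + y1 + (x2 + y2) * x3 * y3 + a * ov) mod p) mod p
      = (s ^ 2 * x1 mod p + s ^ 2 * y1 mod p
        + (x2 + y2) * (s * x3 mod p) * (s * y3 mod p) + c * ov) mod p"
    by (simp add: cong_def mod_mult_right_eq)
  have third: "s * ((x3 + y3) mod p) mod p = (s * x3 mod p + s * y3 mod p) mod p"
    by (simp add: mod_simps algebra_simps)
  show ?thesis using first third by (simp add: xy Qscale_def Qmult_def ov_def)
qed

theorem lemma5p7:
  fixes p a1 a2 :: nat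
  assumes "prime p" and "odd p"
    and "a1 \<in> {1..<p}" and "a2 \<in> {1..<p}"
    and "QuadRes (int p) (int a1) \<longleftrightarrow> QuadRes (int p) (int a2)"
  shows "Q_iso p a1 0 a2 0"
proof -
  have "2 < p"
    using assms(1,2) prime_ge_2_nat[OF assms(1)] by (metis dvd_refl le_neq_implies_less)
  then obtain s where "coprime s p" and ratio: "[s ^ 2 * a1 = a2] (mod p)"
    using square_ratio_exists[OF assms(1) _ assms(3-5)] by blast
  from \<open>coprime s p\<close> have "bij_betw (Qscale p s) (Qcarrier p) (Qcarrier p)" by (rule Qscale_bij)
  with Qscale_hom[OF ratio] show ?thesis unfolding Q_iso_def by blast
qed

end
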